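(* Let $K$ be a field of characteristic zero, $0\ne c\in K$, $\phi$ the $K$-algebra endomorphism of $K[x]$ with $\phi(x)=x+c$, and $\delta=\mathrm{id}-\phi$. Let $a\in K$, $I$ the ideal of $K[x]$ generated by $x^2-ax$, and $\beta=a/c$. For $n\ge0$ set $D_n(t)=\frac{B_{n+1}(t)-B_{n+1}}{(n+1)t}$. Then for all $n\ge0$, $D_n(t)\in\mathbb{Q}[t]$ and $x^n\equiv D_n(\beta)c^n \pmod{\delta(I)}$.
   Context: $\mathrm{id}$ is the identity map of $K[x]$. The Bernoulli polynomials are defined by $\frac{ue^{tu}}{e^u-1}=\sum_{n\ge0}B_n(t)\frac{u^n}{n!}$, and $B_n=B_n(0)$ are the Bernoulli numbers. Congruence modulo the $K$-subspace $\delta(I)$ means the difference lies in $\delta(I)$. *)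

theory Defs
  imports "HOL-Computational_Algebra.Computational_Algebra"
begin

definition shift_hom :: "'a::comm_ring_1 \<Rightarrow> 'a poly \<Rightarrow> 'a poly" where
  "shift_hom c p = pcompose p [:c, 1:]"

definition delta :: "'a::comm_ring_1 \<Rightarrow> 'a poly \<Rightarrow> 'a poly" where
  "delta c p = p - shift_hom c p"

definition ideal_I :: "'a::comm_ring_1 \<Rightarrow> 'a poly set" where
  "ideal_I a = {q * [:0, - a, 1:] | q. True}"

text \<open>Bernoulli numbers B_n = n! [u^n] u/(e^u - 1) (so B_1 = -1/2).\<close>
definition bernoulli_num :: "nat \<Rightarrow> rat" where
  "bernoulli_num n = fact n * fps_nth (fps_X / (fps_exp 1 - 1)) n"

text \<open>Bernoulli polynomials: B_n(t) = n! [u^n] u e^{tu}/(e^u-1)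
  = sum_k (n choose k) B_k t^(n-k) (Cauchy product of the two series).\<close>
definition bernoulli_poly :: "nat \<Rightarrow> rat poly" where
  "bernoulli_poly n = (\<Sum>k\<le>n. smult (of_nat (n choose k) * bernoulli_num k) (monom 1 (n - k)))"

definition D_poly :: "nat \<Rightarrow> rat poly" where
  "D_poly n = (bernoulli_poly (n+1) - [:bernoulli_num (n+1):]) div (smult (of_nat (n+1)) [:0, 1:])"

end

theory Submission
  imports Defs
begin

text \<open>
  Since B_{n+1}(t) - B_{n+1} vanishes at t = 0, D_n is a rational polynomial with
  (n+1) t D_n(t) = B_{n+1}(t) - B_{n+1}. Multiplying the generating function u e^{tu} / (e^u - 1)
  by e^u - 1 gives B_{n+1}(t+1) - B_{n+1}(t) = (n+1) t^n, i.e. (t+1) D_n(t+1) - t D_n(t) = t^n.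
  Hence H(t) = t (D_n(beta) - D_n(t)) lies in the ideal generated by t^2 - beta t, and
  H(t) - H(t+1) = t^n - D_n(beta). The substitution t = x/c turns the shift by 1 into the shift
  by c and t^2 - beta t into (x^2 - a x) / c^2, so c^n H(x/c) is an element of I whose image
  under delta is x^n - D_n(beta) c^n.
\<close>

lemma x_dvd_bernoulli_poly_sub_const: "[:0, 1:] dvd bernoulli_poly m - [:bernoulli_num m:]"
proof -
  have "poly (bernoulli_poly m) 0 = (\<Sum>k\<in>{m}. of_nat (m choose k) * bernoulli_num k * 0 ^ (m - k))"
    unfolding bernoulli_poly_def poly_sum
    by (intro sum.mono_neutral_cong_right) (auto simp: poly_monom)
  then have "poly (bernoulli_poly m - [:bernoulli_num m:]) 0 = 0"
    by simp
  then show ?thesis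
    by (metis minus_zero poly_eq_0_iff_dvd)
qed

lemma bernoulli_poly_sub_const_eq_D_poly:
  "bernoulli_poly (n+1) - [:bernoulli_num (n+1):] = smult (of_nat (n+1)) (pCons 0 (D_poly n))"
proof -
  have "smult (of_nat (n+1)) [:0, 1:] dvd bernoulli_poly (n+1) - [:bernoulli_num (n+1):]"
    using x_dvd_bernoulli_poly_sub_const by (subst smult_dvd_iff) simp
  then have "bernoulli_poly (n+1) - [:bernoulli_num (n+1):] = smult (of_nat (n+1)) [:0, 1:] * D_poly n"
    unfolding D_poly_def by (rule dvd_mult_div_cancel[symmetric])
  then show ?thesis
    by simp
qed

lemma map_poly_of_rat_add:
  "map_poly of_rat (p + q) = (map_poly of_rat p + map_poly of_rat q :: 'a::field_char_0 poly)"
  by (intro poly_eqI) (simp add: coeff_map_poly of_rat_add)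

lemma map_poly_of_rat_diff:
  "map_poly of_rat (p - q) = (map_poly of_rat p - map_poly of_rat q :: 'a::field_char_0 poly)"
  by (intro poly_eqI) (simp add: coeff_map_poly of_rat_diff)

lemma map_poly_of_rat_smult:
  "map_poly of_rat (smult c p) = (smult (of_rat c) (map_poly of_rat p) :: 'a::field_char_0 poly)"
  by (rule map_poly_smult) (simp_all add: of_rat_mult)

lemma map_poly_of_rat_sum:
  "map_poly of_rat (\<Sum>i\<in>A. f i) = (\<Sum>i\<in>A. map_poly of_rat (f i) :: 'a::field_char_0 poly)"
  by (induction A rule: infinite_finite_induct) (simp_all add: map_poly_of_rat_add)

definition fps_of_rat :: "rat fps \<Rightarrow> 'a::field_char_0 fps" where
  "fps_of_rat f = Abs_fps (\<lambda>n. of_rat (f $ n))"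

lemma fps_of_rat_nth [simp]: "fps_of_rat f $ n = of_rat (f $ n)"
  by (simp add: fps_of_rat_def)

lemma fps_of_rat_mult: "fps_of_rat (f * g) = (fps_of_rat f * fps_of_rat g :: 'a::field_char_0 fps)"
  by (rule fps_ext) (simp add: fps_mult_nth of_rat_sum of_rat_mult)

lemma of_rat_fact [simp]: "of_rat (fact n) = fact n"
  by (metis of_nat_fact of_rat_of_nat_eq)

lemma fps_of_rat_exp_1_minus_1: "fps_of_rat (fps_exp 1 - 1) = (fps_exp 1 - 1 :: 'a::field_char_0 fps)"
  by (rule fps_ext) (simp add: of_rat_divide)

definition bernoulli_egf :: "'a::field_char_0 fps" where
  "bernoulli_egf = fps_of_rat (fps_X / (fps_exp 1 - 1))"

lemma bernoulli_egf_nth: "bernoulli_egf $ k = (of_rat (bernoulli_num k) / fact k :: 'a::field_char_0)"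
  by (simp add: bernoulli_egf_def bernoulli_num_def of_rat_mult)

lemma bernoulli_egf_times_exp: "bernoulli_egf * (fps_exp 1 - 1) = (fps_X :: 'a::field_char_0 fps)"
proof -
  have nz: "fps_exp 1 - 1 \<noteq> (0 :: rat fps)"
  proof
    assume "fps_exp 1 - 1 = (0 :: rat fps)"
    then have "(fps_exp 1 - 1 :: rat fps) $ 1 = 0"
      by simp
    then show False
      by simp
  qed
  have "subdegree (fps_exp 1 - 1 :: rat fps) \<le> 1"
    by (rule subdegree_leI) simp
  then have "fps_X / (fps_exp 1 - 1) * (fps_exp 1 - 1) = (fps_X :: rat fps)"
    using fps_times_divide_eq[OF nz] by simp
  then have "fps_of_rat (fps_X / (fps_exp 1 - 1) * (fps_exp 1 - 1)) = (fps_X :: 'a fps)"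
    by (simp add: fps_eq_iff)
  then show ?thesis
    by (simp add: bernoulli_egf_def fps_of_rat_mult fps_of_rat_exp_1_minus_1)
qed

lemma poly_bernoulli_poly:
  "poly (map_poly of_rat (bernoulli_poly m)) y = fact m * (bernoulli_egf * fps_exp y) $ m"
proof -
  have "poly (map_poly of_rat (bernoulli_poly m)) y
      = (\<Sum>k\<le>m. of_nat (m choose k) * of_rat (bernoulli_num k) * y ^ (m - k))"
    by (simp add: bernoulli_poly_def map_poly_of_rat_sum map_poly_of_rat_smult map_poly_monom
        poly_sum poly_monom of_rat_mult)
  also have "\<dots> = (\<Sum>k\<le>m. fact m * (bernoulli_egf $ k * fps_exp y $ (m - k)))"
    by (intro sum.cong refl) (simp add: bernoulli_egf_nth binomial_fact)
  also have "\<dots> = fact m * (bernoulli_egf * fps_exp y) $ m"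
    by (simp add: fps_mult_nth atLeast0AtMost sum_distrib_left)
  finally show ?thesis .
qed

lemma poly_bernoulli_poly_shift:
  "poly (map_poly of_rat (bernoulli_poly (n+1))) (y + 1) - poly (map_poly of_rat (bernoulli_poly (n+1))) y
     = of_nat (n+1) * (y :: 'a::field_char_0) ^ n"
proof -
  have "bernoulli_egf * fps_exp (y + 1) - bernoulli_egf * fps_exp y
      = bernoulli_egf * (fps_exp 1 - 1) * fps_exp y"
    by (simp add: fps_exp_add_mult algebra_simps)
  also have "\<dots> = fps_X * fps_exp y"
    by (simp add: bernoulli_egf_times_exp)
  finally have "(bernoulli_egf * fps_exp (y + 1) - bernoulli_egf * fps_exp y) $ (n+1)
      = (fps_X * fps_exp y) $ (n+1)"
    by (rule arg_cong)
  then have "(bernoulli_egf * fps_exp (y + 1)) $ (n+1) - (bernoulli_egf * fps_exp y) $ (n+1)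
      = y ^ n / fact n"
    by simp
  then show ?thesis
    by (simp add: poly_bernoulli_poly right_diff_distrib[symmetric] del: of_nat_Suc)
qed

lemma poly_D_poly_shift:
  "(y + 1) * poly (map_poly of_rat (D_poly n)) (y + 1) - y * poly (map_poly of_rat (D_poly n)) y
     = (y :: 'a::field_char_0) ^ n"
proof -
  let ?B = "poly (map_poly of_rat (bernoulli_poly (n+1)))" and ?b = "of_rat (bernoulli_num (n+1))"
  let ?D = "poly (map_poly of_rat (D_poly n))"
  have B_eq: "?B x - ?b = of_nat (n+1) * (x * ?D x)" for x :: 'a
    using arg_cong[OF bernoulli_poly_sub_const_eq_D_poly[of n], of "\<lambda>p. poly (map_poly of_rat p) x"]
    by (simp add: map_poly_of_rat_diff map_poly_of_rat_smult map_poly_pCons del: of_nat_Suc)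
  have "of_nat (n+1) * ((y + 1) * ?D (y + 1) - y * ?D y) = (?B (y + 1) - ?b) - (?B y - ?b)"
    by (simp only: B_eq right_diff_distrib)
  also have "\<dots> = of_nat (n+1) * y ^ n"
    using poly_bernoulli_poly_shift[of n y] by simp
  finally show ?thesis
    by (simp del: of_nat_Suc)
qed

lemma pCons_0_mem_ideal_I:
  assumes "poly q a = 0"
  shows "pCons 0 q \<in> ideal_I a"
proof -
  obtain r where "q = [:- a, 1:] * r"
    using assms by (metis poly_eq_0_iff_dvd dvdE)
  then have "pCons 0 q = r * [:0, - a, 1:]"
    by (simp add: algebra_simps)
  then show ?thesis
    unfolding ideal_I_def by blast
qed

lemma smult_mem_ideal_I:
  assumes "p \<in> ideal_I a"
  shows "smult k p \<in> ideal_I a"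
proof -
  obtain q where "p = q * [:0, - a, 1:]"
    using assms unfolding ideal_I_def by blast
  then have "smult k p = smult k q * [:0, - a, 1:]"
    by (simp only: mult_smult_left)
  then show ?thesis
    unfolding ideal_I_def by blast
qed

lemma pcompose_scale_mem_ideal_I:
  fixes c :: "'a::field"
  assumes "c \<noteq> 0" and "p \<in> ideal_I (a / c)"
  shows "pcompose p [:0, inverse c:] \<in> ideal_I a"
proof -
  obtain q where "p = q * [:0, - (a / c), 1:]"
    using assms(2) unfolding ideal_I_def by blast
  moreover have "pcompose [:0, - (a / c), 1:] [:0, inverse c:] = smult (inverse c ^ 2) [:0, - a, 1:]"
    using assms(1) by (simp add: pcompose_pCons power2_eq_square field_simps)
  ultimately have "pcompose p [:0, inverse c:] = smult (inverse c ^ 2) (pcompose q [:0, inverse c:]) * [:0, - a, 1:]"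
    by (simp only: pcompose_mult mult_smult_left mult_smult_right)
  then show ?thesis
    unfolding ideal_I_def by blast
qed

lemma delta_diff: "delta c (p - q) = delta c p - delta c q"
  by (simp add: delta_def shift_hom_def pcompose_diff)

lemma delta_smult: "delta c (smult k p) = smult k (delta c p)"
  by (simp add: delta_def shift_hom_def pcompose_smult smult_diff_right)

lemma delta_pcompose_scale:
  fixes c :: "'a::field"
  assumes "c \<noteq> 0"
  shows "delta c (pcompose p [:0, inverse c:]) = pcompose (delta 1 p) [:0, inverse c:]"
proof -
  have "pcompose [:0, inverse c:] [:c, 1:] = pcompose [:1, 1:] [:0, inverse c:]"
    using assms by (simp add: pcompose_pCons)
  then show ?thesis
    by (simp add: delta_def shift_hom_def pcompose_diff pcompose_assoc[symmetric])
qed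

lemma delta_one_pCons_0_D_poly:
  "delta 1 (pCons 0 (map_poly of_rat (D_poly n))) = - (monom 1 n :: 'a::field_char_0 poly)"
proof (intro poly_eq_poly_eq_iff[THEN iffD1] ext)
  fix y :: 'a
  let ?D = "poly (map_poly of_rat (D_poly n))"
  have "poly (delta 1 (pCons 0 (map_poly of_rat (D_poly n)))) y = y * ?D y - (y + 1) * ?D (y + 1)"
    by (simp add: delta_def shift_hom_def poly_pcompose add.commute)
  also have "y * ?D y - (y + 1) * ?D (y + 1) = - (y ^ n)"
    using poly_D_poly_shift[where y = y and n = n] by (metis minus_diff_eq)
  finally show "poly (delta 1 (pCons 0 (map_poly of_rat (D_poly n)))) y = poly (- monom 1 n) y"
    by (simp only: poly_minus poly_monom mult_1)
qed

theorem lemma4p5: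
  fixes c a :: "'a::field_char_0" and n :: nat
  assumes "c \<noteq> 0"
  shows "smult (of_nat (n+1)) [:0, 1:] dvd (bernoulli_poly (n+1) - [:bernoulli_num (n+1):])
     \<and> monom 1 n - [: poly (map_poly of_rat (D_poly n)) (a / c) * c ^ n :] \<in> delta c ` ideal_I a"
proof
  show "smult (of_nat (n+1)) [:0, 1:] dvd (bernoulli_poly (n+1) - [:bernoulli_num (n+1):])"
    using x_dvd_bernoulli_poly_sub_const by (subst smult_dvd_iff) simp
  define D :: "'a poly" where "D = map_poly of_rat (D_poly n)"
  define d where "d = poly D (a / c)"
  define H where "H = [:0, d:] - pCons 0 D"
  define p where "p = smult (c ^ n) (pcompose H [:0, inverse c:])"
  have "H = pCons 0 ([:d:] - D)"
    by (simp add: H_def)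
  then have "H \<in> ideal_I (a / c)"
    using pCons_0_mem_ideal_I[of "[:d:] - D" "a / c"] by (simp add: d_def)
  then have p_mem: "p \<in> ideal_I a"
    unfolding p_def by (intro smult_mem_ideal_I pcompose_scale_mem_ideal_I assms)
  have "delta 1 [:0, d:] = [:- d:]"
    by (simp add: delta_def shift_hom_def pcompose_pCons)
  then have "delta 1 H = [:- d:] + monom 1 n"
    unfolding H_def D_def delta_diff delta_one_pCons_0_D_poly by simp
  also have "\<dots> = monom 1 n - [:d:]"
    by simp
  finally have "delta c p = smult (c ^ n) (pcompose (monom 1 n - [:d:]) [:0, inverse c:])"
    using assms by (simp add: p_def delta_smult delta_pcompose_scale)
  also have "\<dots> = monom 1 n - [:d * c ^ n:]"
    using assms by (intro poly_eq_poly_eq_iff[THEN iffD1] ext)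
      (simp add: poly_pcompose poly_monom power_mult_distrib right_diff_distrib power_inverse)
  finally show "monom 1 n - [:poly (map_poly of_rat (D_poly n)) (a / c) * c ^ n:] \<in> delta c ` ideal_I a"
    using p_mem unfolding d_def D_def by (metis image_eqI)
qed

end
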